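(* Let $A\cong \mathrm{Aff}(E,C)$ be a group of affine cyclic type. Let $G$ be a finite group with a normal subgroup $N$ such that $G/N\cong A$, and assume that no proper subgroup of $G$ has a quotient isomorphic to $A$. Then $G$ is a group of the form $P\rtimes \mathbb{Z}_m$, where $P$ is a $p$-group, $m$ is a power of a prime $q\ne p$, and the image of $\mathbb{Z}_m$ in $\mathrm{Aut}(P)$ has order at least $|C|$.
   Context: A group of affine cyclic type $\mathrm{Aff}(E,C)$ is a finite group $E\rtimes C$ where $E$ is an elementary abelian $p$-group and $C$ is a cyclic group of prime power order acting faithfully on $E$, with $p\nmid|C|$. $\mathbb{Z}_m$ denotes the cyclic group of order $m$. *)

theory Defs
  imports "HOL-Algebra.Algebra"
begin

definition elem_abelian_sub :: "('a, 'b) monoid_scheme \<Rightarrow> nat \<Rightarrow> 'a set \<Rightarrow> bool" where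
  "elem_abelian_sub A p E \<longleftrightarrow> Factorial_Ring.prime p \<and> subgroup E A \<and> finite E \<and>
     (\<forall>x\<in>E. \<forall>y\<in>E. x \<otimes>\<^bsub>A\<^esub> y = y \<otimes>\<^bsub>A\<^esub> x) \<and>
     (\<forall>x\<in>E. x [^]\<^bsub>A\<^esub> p = \<one>\<^bsub>A\<^esub>)"

(* A = E \<rtimes> C is of affine cyclic type Aff(E,C) (internal semidirect product):
   E normal elementary abelian p-group, C cyclic of prime-power order, p does not divide |C|,
   E \<inter> C = 1, EC = A, and C acts faithfully on E by conjugation. *)
definition affine_cyclic_decomp ::
  "('a, 'b) monoid_scheme \<Rightarrow> nat \<Rightarrow> 'a set \<Rightarrow> 'a set \<Rightarrow> bool" where
  "affine_cyclic_decomp A p E C \<longleftrightarrow>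
     group A \<and> finite (carrier A) \<and>
     elem_abelian_sub A p E \<and> E \<lhd> A \<and>
     subgroup C A \<and> cyclic_group (subgroup_generated A C) \<and>
     (\<exists>q k. Factorial_Ring.prime q \<and> card C = q ^ k) \<and> \<not> p dvd card C \<and>
     E \<inter> C = {\<one>\<^bsub>A\<^esub>} \<and> E <#>\<^bsub>A\<^esub> C = carrier A \<and>
     (\<forall>c\<in>C. (\<forall>e\<in>E. c \<otimes>\<^bsub>A\<^esub> e \<otimes>\<^bsub>A\<^esub> inv\<^bsub>A\<^esub> c = e) \<longrightarrow> c = \<one>\<^bsub>A\<^esub>)"

end

theory Submission
  imports Defs
begin

(* Composing G -> G/N with the isomorphism onto A gives a surjection pi : G -> A under which
   no proper subgroup of G maps onto A.  The preimage K of E is normal in G, and a Sylow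
   p-subgroup P of K still maps onto the p-group E.  By the Frattini argument G = K N_G(P),
   so N_G(P) maps onto A and therefore is G: P is normal.  The q-part g of a preimage of a
   generator of C still maps to a generator of C, so Q = <g> is a cyclic q-group with
   pi(Q) = C.  Then pi(PQ) = EC = A forces PQ = G, and P, Q meet trivially by coprimality.
   Two elements of Q acting alike on P have images acting alike on E = pi(P); as C acts
   faithfully on E, their images coincide, so Q induces at least |C| automorphisms of P. *)

lemma card_image_le_card_image_if_factors:
  assumes "finite D" and "\<And>x y. x \<in> D \<Longrightarrow> y \<in> D \<Longrightarrow> f x = f y \<Longrightarrow> g x = g y"
  shows "card (g ` D) \<le> card (f ` D)"
proof (rule surj_card_le)
  show "finite (f ` D)"
    using assms(1) by simp
  show "g ` D \<subseteq> (\<lambda>F. g (SOME x. x \<in> D \<and> f x = F)) ` f ` D"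
  proof
    fix z assume "z \<in> g ` D"
    then obtain x where x: "x \<in> D" "z = g x"
      by blast
    define x' where "x' = (SOME x'. x' \<in> D \<and> f x' = f x)"
    have "x' \<in> D \<and> f x' = f x"
      unfolding x'_def by (rule someI[of _ x]) (simp add: x(1))
    then have "z = g x'"
      using assms(2)[of x' x] x by simp
    then show "z \<in> (\<lambda>F. g (SOME x. x \<in> D \<and> f x = F)) ` f ` D"
      using x(1) unfolding x'_def by blast
  qed
qed

lemma prime_power_avoiding_prime:
  assumes q: "Factorial_Ring.prime (q::nat)" and not_dvd: "\<not> p dvd q ^ k"
  obtains r j where "Factorial_Ring.prime r" "r \<noteq> p" "q ^ k = r ^ j"
proof (cases "q = p")
  case True
  with not_dvd have "k = 0"
    by (cases k) auto
  moreover have "Factorial_Ring.prime (if p = 2 then 3 else 2 :: nat)"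
    by simp
  ultimately show ?thesis
    using that[of "if p = 2 then 3 else 2" 0] by simp
next
  case False
  with q show ?thesis
    using that by blast
qed

lemma (in group) card_subgroup_dvd:
  assumes "subgroup H G" "subgroup K G" "H \<subseteq> K"
  shows "card H dvd card K"
proof -
  interpret K: group "G\<lparr>carrier := K\<rparr>"
    using subgroup_imp_group[OF assms(2)] .
  have "subgroup H (G\<lparr>carrier := K\<rparr>)"
    using subgroup_incl assms by blast
  from K.lagrange[OF this] show ?thesis
    by (simp add: order_def) (metis dvd_triv_right)
qed

lemma (in group) subgroups_Int_eq_one_if_coprime:
  assumes H: "subgroup H G" and K: "subgroup K G" and cop: "coprime (card H) (card K)"
  shows "H \<inter> K = {\<one>}"
proof -
  have HK: "subgroup (H \<inter> K) G"
    using subgroups_Inter_pair[OF H K] .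
  have "card (H \<inter> K) dvd card H" "card (H \<inter> K) dvd card K"
    using card_subgroup_dvd[OF HK] H K by auto
  with cop have "card (H \<inter> K) = 1"
    by (metis coprime_common_divisor_nat)
  moreover have "\<one> \<in> H \<inter> K"
    using subgroup.one_closed[OF HK] .
  ultimately show ?thesis
    by (metis card_1_singletonE singletonD)
qed

lemma (in group) card_prime_power_if_exponent_prime:
  assumes H: "subgroup H G" and fin: "finite H" and p: "Factorial_Ring.prime p"
    and exp: "\<And>x. x \<in> H \<Longrightarrow> x [^] p = \<one>"
  shows "\<exists>n. card H = p ^ n"
proof (rule ccontr)
  assume "\<nexists>n. card H = p ^ n"
  moreover have "card H \<noteq> 0"
    using fin subgroup.one_closed[OF H] by auto
  ultimately obtain r where r: "Factorial_Ring.prime r" "r dvd card H" "r \<noteq> p"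
    using Ex_other_prime_factor[of "card H" p] p by auto
  then obtain m where "card H = r ^ 1 * m"
    by auto
  interpret H: group "G\<lparr>carrier := H\<rparr>"
    using subgroup_imp_group[OF H] .
  obtain R where R: "subgroup R (G\<lparr>carrier := H\<rparr>)" "card R = r"
    using sylow_thm[OF r(1) H.is_group, of 1 m] \<open>card H = r ^ 1 * m\<close> fin by (auto simp: order_def)
  have RG: "subgroup R G" and RH: "R \<subseteq> H"
    using incl_subgroup[OF H R(1)] subgroup.subset[OF R(1)] by auto
  have "\<not> R \<subseteq> {\<one>}"
    using R(2) prime_gt_1_nat[OF r(1)] card_mono[of "{\<one>}" R] by auto
  then obtain x where x: "x \<in> R" "x \<noteq> \<one>"
    by blast
  have xG: "x \<in> carrier G"
    using x(1) subgroup.subset[OF RG] by blast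
  have "generate G {x} \<subseteq> R"
    using generate_subgroup_incl[OF _ RG] x(1) by blast
  then have "ord x dvd r"
    using card_subgroup_dvd[OF generate_is_subgroup RG] xG R(2) generate_pow_card[OF xG] by auto
  moreover have "ord x dvd p"
    using exp x RH pow_eq_id[OF xG] by blast
  ultimately have "ord x = 1"
    using r p by (metis primes_coprime coprime_common_divisor_nat)
  with x xG show False
    using ord_eq_1 by blast
qed

lemma (in group) cyclic_subgroup_generated_iff:
  assumes C: "subgroup C G"
  shows "cyclic_group (subgroup_generated G C) \<longleftrightarrow> (\<exists>c\<in>C. C = generate G {c})"
proof -
  interpret SG: group "subgroup_generated G C"
    by simp
  have carrier: "carrier (subgroup_generated G C) = C"
    using subgroup.carrier_subgroup_generated_subgroup[OF C] .
  have "range (\<lambda>n::int. c [^]\<^bsub>subgroup_generated G C\<^esub> n) = generate G {c}" if "c \<in> C" for c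
    using that carrier int_pow_subgroup_generated[of c C] generate_pow[of c] subgroup.subset[OF C]
    by auto
  then show ?thesis
    unfolding SG.cyclic_group carrier by auto
qed

lemma (in group) exists_pow_ord_prime_power:
  assumes fin: "finite (carrier G)" and a: "a \<in> carrier G" and q: "Factorial_Ring.prime q"
  obtains s b where "\<not> q dvd s" "ord (a [^] s) = q ^ b"
proof -
  obtain b s where bs: "ord a = q ^ b * s" "\<not> q dvd s"
    using multiplicity_decompose'[of "ord a" q] ord_ge_1[OF fin a] q
    by (metis not_one_le_zero not_prime_unit)
  then have "s \<noteq> 0"
    by (metis dvd_0_right)
  then have "ord (a [^] s) = q ^ b"
    using ord_pow[OF a] bs(1) by simp
  with bs(2) show ?thesis
    using that by blast
qed

lemma (in group) generate_pow_eq_if_coprime: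
  assumes fin: "finite (carrier G)" and a: "a \<in> carrier G" and cop: "coprime k (ord a)"
  shows "generate G {a [^] k} = generate G {a}"
proof (rule card_subset_eq)
  show "finite (generate G {a})"
    using finite_subset[OF generate_incl fin] a by blast
  show "generate G {a [^] k} \<subseteq> generate G {a}"
  proof (rule generate_subgroup_incl)
    have "a [^] int k \<in> generate G {a}"
      unfolding generate_pow[OF a] by blast
    then show "{a [^] k} \<subseteq> generate G {a}"
      by (simp add: int_pow_int)
    show "subgroup (generate G {a}) G"
      using a by (simp add: generate_is_subgroup)
  qed
  show "card (generate G {a [^] k}) = card (generate G {a})"
    using generate_pow_card a pow_ord_eq_ord_iff[OF fin a] cop by simp
qed

lemma (in group) conj_image_subgroup:
  assumes H: "subgroup H G" and g: "g \<in> carrier G"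
  shows "subgroup ((\<lambda>h. g \<otimes> h \<otimes> inv g) ` H) G" "card ((\<lambda>h. g \<otimes> h \<otimes> inv g) ` H) = card H"
proof -
  have "(inv (inv g) <#\<^bsub>G\<^esub> H) #> inv g = (\<lambda>h. g \<otimes> h \<otimes> inv g) ` H"
    unfolding l_coset_def r_coset_def using g by auto
  then show "subgroup ((\<lambda>h. g \<otimes> h \<otimes> inv g) ` H) G"
    using subgroup_conjugation_is_surj1[of "inv g" H] g H by simp
  have "inj_on (\<lambda>h. g \<otimes> h \<otimes> inv g) H"
    using conjugation_is_inj g subgroup.subset[OF H] by (intro inj_onI) blast
  then show "card ((\<lambda>h. g \<otimes> h \<otimes> inv g) ` H) = card H"
    by (rule card_image)
qed

lemma (in group) mem_normalizer_iff:
  assumes S: "subgroup S G" and fin: "finite S"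
  shows "g \<in> normalizer G S \<longleftrightarrow> g \<in> carrier G \<and> (\<forall>s\<in>S. g \<otimes> s \<otimes> inv g \<in> S)"
proof -
  have SG: "S \<subseteq> carrier G"
    using subgroup.subset[OF S] .
  have conj_eq: "(g <#\<^bsub>G\<^esub> S) #> inv g = S \<longleftrightarrow> (\<forall>s\<in>S. g \<otimes> s \<otimes> inv g \<in> S)" if g: "g \<in> carrier G"
  proof -
    have conj: "(g <#\<^bsub>G\<^esub> S) #> inv g = (\<lambda>s. g \<otimes> s \<otimes> inv g) ` S"
      unfolding l_coset_def r_coset_def by blast
    have "card ((\<lambda>s. g \<otimes> s \<otimes> inv g) ` S) = card S"
      using conj_image_subgroup(2)[OF S g] .
    then have "(\<lambda>s. g \<otimes> s \<otimes> inv g) ` S = S \<longleftrightarrow> (\<lambda>s. g \<otimes> s \<otimes> inv g) ` S \<subseteq> S"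
      using card_subset_eq[OF fin] by auto
    then show ?thesis
      unfolding conj by blast
  qed
  then show ?thesis
    unfolding normalizer_def stabilizer_def using SG conj_eq by auto
qed

lemma (in group) inj_on_conj_if_faithful:
  assumes C: "subgroup C G" and E: "E \<subseteq> carrier G"
    and faithful: "\<And>c. c \<in> C \<Longrightarrow> (\<forall>e\<in>E. c \<otimes> e \<otimes> inv c = e) \<Longrightarrow> c = \<one>"
  shows "inj_on (\<lambda>c. \<lambda>e\<in>E. c \<otimes> e \<otimes> inv c) C"
proof (rule inj_onI)
  fix c d assume c: "c \<in> C" and d: "d \<in> C"
    and eq: "(\<lambda>e\<in>E. c \<otimes> e \<otimes> inv c) = (\<lambda>e\<in>E. d \<otimes> e \<otimes> inv d)"
  have cG: "c \<in> carrier G" and dG: "d \<in> carrier G"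
    using c d subgroup.subset[OF C] by auto
  have "inv d \<otimes> c \<otimes> e \<otimes> inv (inv d \<otimes> c) = e" if e: "e \<in> E" for e
  proof -
    have eG: "e \<in> carrier G"
      using e E by blast
    have "c \<otimes> e \<otimes> inv c = d \<otimes> e \<otimes> inv d"
      using fun_cong[OF eq, of e] e by simp
    then have "inv d \<otimes> (c \<otimes> e \<otimes> inv c) \<otimes> d = inv d \<otimes> (d \<otimes> e \<otimes> inv d) \<otimes> d"
      by simp
    then show ?thesis
      using cG dG eG by (simp add: m_assoc inv_mult_group inv_solve_left')
  qed
  then have "inv d \<otimes> c = \<one>"
    using faithful subgroup.m_closed[OF C subgroup.m_inv_closed[OF C d] c] by blast
  then show "c = d"
    using cG dG by (metis inv_equality inv_inv inv_closed)
qed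

lemma (in group) exists_sylow_subgroup:
  assumes K: "subgroup K G" and fin: "finite K" and p: "Factorial_Ring.prime p"
  obtains S a m where "subgroup S G" "S \<subseteq> K" "card S = p ^ a" "card K = p ^ a * m" "\<not> p dvd m"
proof -
  have "card K \<noteq> 0"
    using fin subgroup.one_closed[OF K] by auto
  then obtain m where card_K: "card K = p ^ multiplicity p (card K) * m" and not_dvd: "\<not> p dvd m"
    using multiplicity_decompose' p by (metis not_prime_unit)
  interpret K: group "G\<lparr>carrier := K\<rparr>"
    using subgroup_imp_group[OF K] .
  obtain S where S: "subgroup S (G\<lparr>carrier := K\<rparr>)" "card S = p ^ multiplicity p (card K)"
    using sylow_thm[OF p K.is_group] card_K fin by (auto simp: order_def)
  then show ?thesis
    using that incl_subgroup[OF K S(1)] subgroup.subset[OF S(1)] card_K not_dvd by auto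
qed

lemma (in group_action) p_group_fixed_point:
  assumes p: "Factorial_Ring.prime p" and order: "order G = p ^ b"
    and finE: "finite E" and not_dvd: "\<not> p dvd card E"
  shows "\<exists>x\<in>E. \<forall>g\<in>carrier G. \<phi> g x = x"
proof -
  have "(\<Sum>orb\<in>orbits G E \<phi>. card orb) = card E"
    using disjoint_sum[OF finE, of "\<lambda>_. 1::nat"] by (simp flip: card_eq_sum[abs_def])
  then obtain x where x: "x \<in> E" and not_dvd_orbit: "\<not> p dvd card (orbit G \<phi> x)"
    using not_dvd dvd_sum[of "orbits G E \<phi>" p card] unfolding orbits_def by auto
  have "card (orbit G \<phi> x) dvd p ^ b"
    using orbit_stabilizer_theorem[OF x] order by (metis dvd_triv_left)
  then obtain i where "card (orbit G \<phi> x) = p ^ i"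
    using divides_primepow_nat[OF p] by blast
  with not_dvd_orbit have orbit_one: "card (orbit G \<phi> x) = 1"
    by (cases i) auto
  have "\<phi> g x = x" if "g \<in> carrier G" for g
  proof -
    have "\<phi> g x \<in> orbit G \<phi> x"
      using that unfolding orbit_def by auto
    then show ?thesis
      using orbit_one orbit_refl[OF x] by (metis card_1_singletonE singletonD)
  qed
  with x show ?thesis
    by blast
qed

lemma (in group) rcosets_translation_action:
  assumes S: "subgroup S G"
  shows "group_action G (rcosets S) (\<lambda>g. \<lambda>U\<in>rcosets S. U #> inv g)"
proof -
  have closed: "U #> h \<in> rcosets S" if "U \<in> rcosets S" "h \<in> carrier G" for U h
    using that by (auto simp: RCOSETS_def coset_mult_assoc S subgroup.subset)
  have assoc: "U #> h #> k = U #> (h \<otimes> k)" if "U \<in> rcosets S" "h \<in> carrier G" "k \<in> carrier G" for U h k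
    using that by (auto simp: RCOSETS_def coset_mult_assoc S subgroup.subset m_assoc)
  have bij: "(\<lambda>U\<in>rcosets S. U #> inv g) \<in> carrier (BijGroup (rcosets S))" if g: "g \<in> carrier G" for g
  proof -
    have "bij_betw (\<lambda>U. U #> inv g) (rcosets S) (rcosets S)"
    proof (rule bij_betwI[where g = "\<lambda>U. U #> g"])
      show "U #> inv g #> g = U" "U #> g #> inv g = U" if "U \<in> rcosets S" for U
        using that g assoc[OF that] subgroup.rcosets_carrier[OF S is_group that] by simp_all
      show "(\<lambda>U. U #> inv g) \<in> rcosets S \<rightarrow> rcosets S" "(\<lambda>U. U #> g) \<in> rcosets S \<rightarrow> rcosets S"
        using closed g by auto
    qed
    then show ?thesis
      by (simp add: BijGroup_def Bij_def)
  qed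
  have mult: "(\<lambda>U\<in>rcosets S. U #> inv (x \<otimes> y))
      = (\<lambda>U\<in>rcosets S. U #> inv x) \<otimes>\<^bsub>BijGroup (rcosets S)\<^esub> (\<lambda>U\<in>rcosets S. U #> inv y)"
    if xy: "x \<in> carrier G" "y \<in> carrier G" for x y
  proof -
    have "(\<lambda>U\<in>rcosets S. U #> inv (x \<otimes> y))
        = compose (rcosets S) (\<lambda>U\<in>rcosets S. U #> inv x) (\<lambda>U\<in>rcosets S. U #> inv y)"
      unfolding compose_def
      by (intro restrict_ext) (simp add: closed assoc xy inv_mult_group)
    then show ?thesis
      using bij xy by (simp add: BijGroup_def)
  qed
  show ?thesis
    unfolding group_action_def group_hom_def group_hom_axioms_def
    using bij mult by (simp add: group_BijGroup hom_def)
qed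

lemma (in group) conj_into_sylow_subgroup:
  assumes fin: "finite (carrier G)" and p: "Factorial_Ring.prime p"
    and S: "subgroup S G" "card S = p ^ a" and T: "subgroup T G" "card T = p ^ b"
    and order: "order G = p ^ a * m" and not_dvd: "\<not> p dvd m"
  shows "\<exists>y\<in>carrier G. \<forall>t\<in>T. y \<otimes> t \<otimes> inv y \<in> S"
proof -
  interpret T_act: group_action "G\<lparr>carrier := T\<rparr>" "rcosets S" "\<lambda>g. \<lambda>U\<in>rcosets S. U #> inv g"
    using group_action.induced_action[OF rcosets_translation_action[OF S(1)] T(1)] .
  have finR: "finite (rcosets S)"
    using rcosets_subset_PowG[OF S(1)] fin by (meson finite_Pow_iff finite_subset)
  have "card (rcosets S) = m"
    using lagrange[OF S(1)] order S(2) p by (simp add: prime_gt_0_nat)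
  then obtain U where U: "U \<in> rcosets S" and fixed: "\<And>t. t \<in> T \<Longrightarrow> U #> inv t = U"
    using T_act.p_group_fixed_point[of p b, OF p _ finR] not_dvd T(2) by (auto simp: order_def)
  obtain y where y: "y \<in> carrier G" "U = S #> y"
    using U unfolding RCOSETS_def by blast
  have "y \<otimes> t \<otimes> inv y \<in> S" if t: "t \<in> T" for t
  proof -
    have tG: "t \<in> carrier G"
      using t subgroup.subset[OF T(1)] by blast
    have "S #> (y \<otimes> t) = S #> y"
      using fixed[OF subgroup.m_inv_closed[OF T(1) t]] tG y S(1)
      by (simp add: coset_mult_assoc subgroup.subset)
    then have "y \<otimes> t \<in> S #> y"
      using repr_independenceD[OF S(1)] tG y by (metis m_closed)
    then show ?thesis
      using subgroup.rcos_module_imp[OF S(1) is_group y(1)] by blast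
  qed
  with y show ?thesis
    by blast
qed

lemma (in group) frattini_argument:
  assumes fin: "finite (carrier G)" and p: "Factorial_Ring.prime p" and K: "K \<lhd> G"
    and S: "subgroup S G" "S \<subseteq> K" "card S = p ^ a"
    and card_K: "card K = p ^ a * m" and not_dvd: "\<not> p dvd m"
  shows "K <#> normalizer G S = carrier G"
proof
  have KG: "K \<subseteq> carrier G"
    using normal_imp_subgroup[OF K] subgroup.subset by blast
  have SG: "S \<subseteq> carrier G"
    using subgroup.subset[OF S(1)] .
  show "K <#> normalizer G S \<subseteq> carrier G"
    using setmult_subset_G[OF KG] subgroup.subset[OF normalizer_imp_subgroup[OF SG]] by blast
  show "carrier G \<subseteq> K <#> normalizer G S"
  proof
    fix y assume y: "y \<in> carrier G"
    define T where "T = (\<lambda>s. y \<otimes> s \<otimes> inv y) ` S"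
    have T: "subgroup T G" and card_T: "card T = p ^ a"
      unfolding T_def using conj_image_subgroup[OF S(1) y] S(3) by simp_all
    have TK: "T \<subseteq> K"
      unfolding T_def using normal_invE(2)[OF K y] S(2) by blast
    interpret K: group "G\<lparr>carrier := K\<rparr>"
      using subgroup_imp_group[OF normal_imp_subgroup[OF K]] .
    obtain x where x: "x \<in> K" and xT: "\<forall>t\<in>T. x \<otimes> t \<otimes> inv\<^bsub>G\<lparr>carrier := K\<rparr>\<^esub> x \<in> S"
      using K.conj_into_sylow_subgroup[of p S a T a m] fin p card_T card_K not_dvd S(3)
        subgroup_incl[OF S(1) normal_imp_subgroup[OF K] S(2)] subgroup_incl[OF T normal_imp_subgroup[OF K] TK]
        finite_subset[OF KG fin] by (auto simp: order_def)
    have xG: "x \<in> carrier G"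
      using x KG by blast
    have "x \<otimes> y \<in> normalizer G S"
    proof -
      have "x \<otimes> y \<otimes> s \<otimes> inv (x \<otimes> y) \<in> S" if s: "s \<in> S" for s
      proof -
        have "x \<otimes> (y \<otimes> s \<otimes> inv y) \<otimes> inv x \<in> S"
          using xT s m_inv_consistent[OF normal_imp_subgroup[OF K] x] unfolding T_def by auto
        then show ?thesis
          using xG y s SG by (simp add: m_assoc inv_mult_group subsetD)
      qed
      then show ?thesis
        using mem_normalizer_iff[OF S(1) finite_subset[OF SG fin]] xG y by auto
    qed
    moreover have "y = inv x \<otimes> (x \<otimes> y)"
      using xG y by (simp add: m_assoc[symmetric])
    moreover have "inv x \<in> K"
      using normal_imp_subgroup[OF K] x by (rule subgroup.m_inv_closed)
    ultimately show "y \<in> K <#> normalizer G S"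
      unfolding set_mult_def by blast
  qed
qed

lemma (in group_hom) card_image_mult_card_kernel:
  assumes K: "subgroup K G" and fin: "finite K"
  shows "card (h ` K) * card (K \<inter> kernel G H h) = card K"
proof -
  interpret hK: group_hom "G\<lparr>carrier := K\<rparr>" "H\<lparr>carrier := h ` K\<rparr>" h
    using induced_group_hom[OF K] .
  have ker: "kernel (G\<lparr>carrier := K\<rparr>) (H\<lparr>carrier := h ` K\<rparr>) h = K \<inter> kernel G H h"
    using subgroup.subset[OF K] by (auto simp: kernel_def)
  have "card (carrier (G\<lparr>carrier := K\<rparr> Mod (K \<inter> kernel G H h))) = card (h ` K)"
    using iso_same_card[OF hK.FactGroup_iso] ker by simp
  moreover have "card (rcosets\<^bsub>G\<lparr>carrier := K\<rparr>\<^esub> (K \<inter> kernel G H h)) * card (K \<inter> kernel G H h) = card K"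
    using group.lagrange[OF hK.G.is_group hK.subgroup_kernel] ker by (simp add: order_def)
  ultimately show ?thesis
    by (simp add: FactGroup_def)
qed

lemma (in group_hom) normal_preimage:
  assumes N: "N \<lhd> H"
  shows "{x \<in> carrier G. h x \<in> N} \<lhd> G"
proof -
  interpret N: normal N H
    using N .
  have "group_hom G (H Mod N) ((#>\<^bsub>H\<^esub>) N \<circ> h)"
    using Group.hom_compose[OF homh N.r_coset_hom_Mod] N.factorgroup_is_group
    by (simp add: group_hom_def group_hom_axioms_def)
  moreover have "kernel G (H Mod N) ((#>\<^bsub>H\<^esub>) N \<circ> h) = {x \<in> carrier G. h x \<in> N}"
    using N.rcos_const H.coset_join1[OF _ _ N.subgroup_axioms] by (auto simp: kernel_def)
  ultimately show ?thesis
    using group_hom.normal_kernel by metis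
qed

lemma (in group_hom) image_sylow_eq_image_if_prime_power:
  assumes p: "Factorial_Ring.prime p" and K: "subgroup K G" "finite K"
    and S: "subgroup S G" "S \<subseteq> K" "card S = p ^ a"
    and card_K: "card K = p ^ a * m" and not_dvd: "\<not> p dvd m"
    and card_image: "card (h ` K) = p ^ e"
  shows "h ` S = h ` K"
proof -
  have finS: "finite S"
    using finite_subset[OF S(2) K(2)] .
  have SkerG: "subgroup (S \<inter> kernel G H h) G" and KkerG: "subgroup (K \<inter> kernel G H h) G"
    using G.subgroups_Inter_pair subgroup_kernel S(1) K(1) by auto
  have cardS: "card (h ` S) * card (S \<inter> kernel G H h) = p ^ a"
    using card_image_mult_card_kernel[OF S(1) finS] S(3) by simp
  then obtain j where j: "card (S \<inter> kernel G H h) = p ^ j"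
    using divides_primepow_nat[OF p] by (metis dvd_triv_right)
  have "p ^ j dvd card (K \<inter> kernel G H h)"
    using G.card_subgroup_dvd[OF SkerG KkerG] S(2) j by auto
  then have "p ^ e * p ^ j dvd p ^ a * m"
    using card_image_mult_card_kernel[OF K] card_image card_K by (metis mult_dvd_mono dvd_refl)
  then have "p ^ (e + j) dvd p ^ a"
    using not_dvd p by (simp add: power_add coprime_dvd_mult_left_iff prime_imp_coprime)
  then have "e + j \<le> a"
    using power_dvd_imp_le prime_gt_1_nat[OF p] by blast
  then have "p ^ a = p ^ (a - j) * p ^ j"
    by (simp flip: power_add)
  then have "card (h ` S) = p ^ (a - j)"
    using cardS j p by (simp add: prime_gt_0_nat)
  moreover have "p ^ e \<le> p ^ (a - j)"
    using \<open>e + j \<le> a\<close> prime_gt_0_nat[OF p] by (intro power_increasing) auto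
  ultimately have "card (h ` K) \<le> card (h ` S)"
    using card_image by simp
  moreover have "h ` S \<subseteq> h ` K"
    using S(2) by blast
  ultimately show ?thesis
    using K(2) by (simp add: card_seteq)
qed

lemma (in group_hom) conj_image_eq_if_conj_eq:
  assumes x: "x \<in> carrier G" and y: "y \<in> carrier G" and S: "S \<subseteq> carrier G"
    and eq: "(\<lambda>s\<in>S. x \<otimes> s \<otimes> inv x) = (\<lambda>s\<in>S. y \<otimes> s \<otimes> inv y)"
  shows "(\<lambda>e\<in>h ` S. h x \<otimes>\<^bsub>H\<^esub> e \<otimes>\<^bsub>H\<^esub> inv\<^bsub>H\<^esub> h x)
       = (\<lambda>e\<in>h ` S. h y \<otimes>\<^bsub>H\<^esub> e \<otimes>\<^bsub>H\<^esub> inv\<^bsub>H\<^esub> h y)"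
proof (rule restrict_ext)
  fix e assume "e \<in> h ` S"
  then obtain s where s: "s \<in> S" "e = h s"
    by blast
  then have "h (x \<otimes> s \<otimes> inv x) = h (y \<otimes> s \<otimes> inv y)"
    using fun_cong[OF eq, of s] by simp
  then show "h x \<otimes>\<^bsub>H\<^esub> e \<otimes>\<^bsub>H\<^esub> inv\<^bsub>H\<^esub> h x = h y \<otimes>\<^bsub>H\<^esub> e \<otimes>\<^bsub>H\<^esub> inv\<^bsub>H\<^esub> h y"
    using s x y S by (auto simp: subsetD)
qed

lemma (in group_hom) card_image_le_card_conj_action:
  assumes C: "subgroup C H" and Q: "Q \<subseteq> carrier G" "finite Q" "h ` Q \<subseteq> C" and S: "S \<subseteq> carrier G"
    and faithful: "\<And>c. c \<in> C \<Longrightarrow> (\<forall>e\<in>h ` S. c \<otimes>\<^bsub>H\<^esub> e \<otimes>\<^bsub>H\<^esub> inv\<^bsub>H\<^esub> c = e) \<Longrightarrow> c = \<one>\<^bsub>H\<^esub>"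
  shows "card (h ` Q) \<le> card ((\<lambda>x. \<lambda>y\<in>S. x \<otimes> y \<otimes> inv x) ` Q)"
proof (rule card_image_le_card_image_if_factors[OF Q(2)])
  have inj: "inj_on (\<lambda>c. \<lambda>e\<in>h ` S. c \<otimes>\<^bsub>H\<^esub> e \<otimes>\<^bsub>H\<^esub> inv\<^bsub>H\<^esub> c) C"
    by (rule H.inj_on_conj_if_faithful[OF C]) (use S faithful in auto)
  fix x y assume xy: "x \<in> Q" "y \<in> Q" and eq: "(\<lambda>s\<in>S. x \<otimes> s \<otimes> inv x) = (\<lambda>s\<in>S. y \<otimes> s \<otimes> inv y)"
  then have "x \<in> carrier G" "y \<in> carrier G" "h x \<in> C" "h y \<in> C"
    using Q by auto
  then show "h x = h y"
    using conj_image_eq_if_conj_eq[OF _ _ S eq] inj_onD[OF inj] by blast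
qed

lemma (in group_hom) cyclic_prime_power_subgroup_lift:
  assumes finG: "finite (carrier G)" and finH: "finite (carrier H)" and onto: "h ` carrier G = carrier H"
    and q: "Factorial_Ring.prime q"
    and C: "subgroup C H" "cyclic_group (subgroup_generated H C)" "card C = q ^ k"
  obtains Q b where "subgroup Q G" "cyclic_group (subgroup_generated G Q)" "card Q = q ^ b" "h ` Q = C"
proof -
  obtain c where c: "c \<in> C" "C = generate H {c}"
    using H.cyclic_subgroup_generated_iff[OF C(1)] C(2) by blast
  then have cH: "c \<in> carrier H"
    using subgroup.subset[OF C(1)] by blast
  then have ord_c: "H.ord c = q ^ k"
    using H.generate_pow_card c(2) C(3) by simp
  obtain g0 where g0: "g0 \<in> carrier G" "h g0 = c"
    using onto cH by (metis imageE)
  obtain s b where s: "\<not> q dvd s" and ord_g: "G.ord (g0 [^] s) = q ^ b"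
    using G.exists_pow_ord_prime_power[OF finG g0(1) q] .
  have "coprime s (H.ord c)"
    using s q ord_c by (simp add: prime_imp_coprime coprime_commute)
  then have "h ` generate G {g0 [^] s} = C"
    using generate_img[of "{g0 [^] s}"] g0 c(2) H.generate_pow_eq_if_coprime[OF finH cH]
    by (simp add: hom_nat_pow)
  moreover have g: "g0 [^] s \<in> carrier G"
    using g0 by simp
  moreover have "cyclic_group (subgroup_generated G (generate G {g0 [^] s}))"
    using G.cyclic_subgroup_generated_iff[OF G.generate_is_subgroup] g generate.incl[of "g0 [^] s"]
    by blast
  ultimately show ?thesis
    using that[of "generate G {g0 [^] s}" b] G.generate_is_subgroup[of "{g0 [^] s}"]
      G.generate_pow_card ord_g by simp
qed

(* Equivalently: pi is onto and its kernel lies in the Frattini subgroup of G. *)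
locale frattini_cover = group_hom G A \<pi> for G (structure) and A (structure) and \<pi> +
  assumes image_carrier: "\<pi> ` carrier G = carrier A"
    and subgroup_onto_eq_carrier: "\<And>K. subgroup K G \<Longrightarrow> \<pi> ` K = carrier A \<Longrightarrow> K = carrier G"

lemma frattini_cover_if_no_subgroup_quotient:
  assumes G: "group G" and A: "group A" and N: "N \<lhd> G" and iso: "G Mod N \<cong> A"
    and minimal: "\<And>H M. subgroup H G \<Longrightarrow> H \<noteq> carrier G \<Longrightarrow>
      M \<lhd> G\<lparr>carrier := H\<rparr> \<Longrightarrow> \<not> (G\<lparr>carrier := H\<rparr> Mod M \<cong> A)"
  shows "\<exists>\<pi>. frattini_cover G A \<pi>"
proof -
  interpret N: normal N G
    using N .
  obtain \<phi> where \<phi>: "\<phi> \<in> iso (G Mod N) A"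
    using iso unfolding is_iso_def by blast
  define \<pi> where "\<pi> = \<phi> \<circ> (#>\<^bsub>G\<^esub>) N"
  interpret \<pi>: group_hom G A \<pi>
    unfolding \<pi>_def group_hom_def group_hom_axioms_def
    using Group.hom_compose[OF N.r_coset_hom_Mod] \<phi> G A by (auto simp: iso_def)
  have "\<phi> ` carrier (G Mod N) = carrier A"
    using \<phi> by (simp add: iso_def bij_betw_def)
  then have onto: "\<pi> ` carrier G = carrier A"
    unfolding \<pi>_def carrier_FactGroup by (simp add: image_comp)
  have "K = carrier G" if K: "subgroup K G" and onto_K: "\<pi> ` K = carrier A" for K
  proof (rule ccontr)
    assume "K \<noteq> carrier G"
    interpret \<pi>K: group_hom "G\<lparr>carrier := K\<rparr>" A \<pi>
      using \<pi>.induced_group_hom'[OF K] .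
    have "G\<lparr>carrier := K\<rparr> Mod kernel (G\<lparr>carrier := K\<rparr>) A \<pi> \<cong> A"
      using \<pi>K.FactGroup_iso onto_K by simp
    then show False
      using minimal[OF K \<open>K \<noteq> carrier G\<close> \<pi>K.normal_kernel] by blast
  qed
  then have "frattini_cover G A \<pi>"
    using onto by unfold_locales auto
  then show ?thesis
    by blast
qed

context frattini_cover
begin

lemma subgroup_eq_carrier_if_supplement:
  assumes N: "subgroup N G" and K: "K \<subseteq> carrier G"
    and KN: "K <#> N = carrier G" and image_K: "\<pi> ` K \<subseteq> \<pi> ` N"
  shows "N = carrier G"
proof (rule subgroup_onto_eq_carrier[OF N])
  have NG: "N \<subseteq> carrier G"
    using subgroup.subset[OF N] .
  show "\<pi> ` N = carrier A"
  proof
    show "\<pi> ` N \<subseteq> carrier A"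
      using NG by auto
    show "carrier A \<subseteq> \<pi> ` N"
    proof
      fix z assume "z \<in> carrier A"
      then obtain y where "y \<in> K <#> N" "z = \<pi> y"
        using image_carrier KN by blast
      then obtain k n where kn: "k \<in> K" "n \<in> N" "z = \<pi> (k \<otimes> n)"
        unfolding set_mult_def by blast
      then obtain n' where n': "n' \<in> N" "\<pi> k = \<pi> n'"
        using image_K by blast
      then have "z = \<pi> (n' \<otimes> n)"
        using kn K NG by (auto simp: subsetD)
      then show "z \<in> \<pi> ` N"
        using subgroup.m_closed[OF N n'(1) kn(2)] by blast
    qed
  qed
qed

lemma normal_prime_power_lift:
  assumes fin: "finite (carrier G)" and p: "Factorial_Ring.prime p"
    and E: "E \<lhd> A" and card_E: "card E = p ^ e"
  shows "\<exists>S. S \<lhd> G \<and> (\<exists>n. card S = p ^ n) \<and> \<pi> ` S = E"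
proof -
  define K where "K = {x \<in> carrier G. \<pi> x \<in> E}"
  have K: "K \<lhd> G"
    unfolding K_def using normal_preimage[OF E] .
  have KG: "K \<subseteq> carrier G" and finK: "finite K"
    unfolding K_def using fin by auto
  have image_K: "\<pi> ` K = E"
  proof
    show "E \<subseteq> \<pi> ` K"
    proof
      fix z assume z: "z \<in> E"
      then obtain x where "x \<in> carrier G" "\<pi> x = z"
        using image_carrier subgroup.subset[OF normal_imp_subgroup[OF E]] by (metis imageE subsetD)
      with z show "z \<in> \<pi> ` K"
        unfolding K_def by blast
    qed
  qed (auto simp: K_def)
  obtain S a m where SG: "subgroup S G" and SK: "S \<subseteq> K" and card_S: "card S = p ^ a"
    and card_K: "card K = p ^ a * m" and not_dvd: "\<not> p dvd m"
    using G.exists_sylow_subgroup[OF normal_imp_subgroup[OF K] finK p] .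
  have image_S: "\<pi> ` S = E"
    using image_sylow_eq_image_if_prime_power[OF p normal_imp_subgroup[OF K] finK SG SK card_S card_K not_dvd]
      image_K card_E by simp
  have "S \<subseteq> normalizer G S"
    using G.subgroup_in_normalizer[OF SG] normal_imp_subgroup subgroup.subset by fastforce
  then have "normalizer G S = carrier G"
    using subgroup_eq_carrier_if_supplement[OF G.normalizer_imp_subgroup KG
        G.frattini_argument[OF fin p K SG SK card_S card_K not_dvd]] image_K image_S
      subgroup.subset[OF SG] by blast
  then have "S \<lhd> G"
    using G.mem_normalizer_iff[OF SG finite_subset[OF SK finK]] by (intro G.normal_invI[OF SG]) blast
  with card_S image_S show ?thesis
    by blast
qed

lemma set_mult_eq_carrier:
  assumes S: "S \<lhd> G" and Q: "subgroup Q G" and SQ: "\<pi> ` S <#>\<^bsub>A\<^esub> \<pi> ` Q = carrier A"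
  shows "S <#> Q = carrier G"
proof (rule subgroup_onto_eq_carrier)
  interpret second_isomorphism_grp S G Q
    using S Q by (simp add: second_isomorphism_grp_def second_isomorphism_grp_axioms_def)
  show "subgroup (S <#> Q) G"
    using normal_set_mult_subgroup .
  show "\<pi> ` (S <#> Q) = carrier A"
    using set_mult_hom[OF homh] SQ subgroup.subset[OF Q] normal_imp_subgroup[OF S] subgroup.subset by metis
qed

end

lemma affine_cyclic_decompD:
  assumes "affine_cyclic_decomp A p E C"
  shows "group A" and "finite (carrier A)" and "Factorial_Ring.prime p"
    and "E \<lhd> A" and "\<exists>e. card E = p ^ e"
    and "subgroup C A" and "cyclic_group (subgroup_generated A C)"
    and "\<exists>q k. Factorial_Ring.prime q \<and> q \<noteq> p \<and> card C = q ^ k"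
    and "E <#>\<^bsub>A\<^esub> C = carrier A"
    and "\<And>c. c \<in> C \<Longrightarrow> (\<forall>e\<in>E. c \<otimes>\<^bsub>A\<^esub> e \<otimes>\<^bsub>A\<^esub> inv\<^bsub>A\<^esub> c = e) \<Longrightarrow> c = \<one>\<^bsub>A\<^esub>"
proof -
  show A: "group A" and "finite (carrier A)" and p: "Factorial_Ring.prime p" and "E \<lhd> A"
    and "subgroup C A" and "cyclic_group (subgroup_generated A C)" and "E <#>\<^bsub>A\<^esub> C = carrier A"
    and "\<And>c. c \<in> C \<Longrightarrow> (\<forall>e\<in>E. c \<otimes>\<^bsub>A\<^esub> e \<otimes>\<^bsub>A\<^esub> inv\<^bsub>A\<^esub> c = e) \<Longrightarrow> c = \<one>\<^bsub>A\<^esub>"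
    using assms unfolding affine_cyclic_decomp_def elem_abelian_sub_def by blast+
  have "subgroup E A" "finite E" "\<And>x. x \<in> E \<Longrightarrow> x [^]\<^bsub>A\<^esub> p = \<one>\<^bsub>A\<^esub>"
    using assms unfolding affine_cyclic_decomp_def elem_abelian_sub_def by blast+
  then show "\<exists>e. card E = p ^ e"
    using group.card_prime_power_if_exponent_prime[OF A] p by blast
  obtain q0 k0 where "Factorial_Ring.prime q0" "card C = q0 ^ k0" and "\<not> p dvd card C"
    using assms unfolding affine_cyclic_decomp_def by blast
  then show "\<exists>q k. Factorial_Ring.prime q \<and> q \<noteq> p \<and> card C = q ^ k"
    using prime_power_avoiding_prime by metis
qed

theorem lemma3p11:
  fixes A :: "('a, 'b) monoid_scheme" and G :: "('c, 'd) monoid_scheme"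
  assumes "affine_cyclic_decomp A p E C"
    and "group G" and "finite (carrier G)"
    and "N \<lhd> G" and "G Mod N \<cong> A"
    and "\<And>H M. subgroup H G \<Longrightarrow> H \<noteq> carrier G \<Longrightarrow>
           normal M (G\<lparr>carrier := H\<rparr>) \<Longrightarrow> \<not> ((G\<lparr>carrier := H\<rparr>) Mod M \<cong> A)"
  shows "\<exists>P Q q k. P \<lhd> G \<and> (\<exists>n. card P = p ^ n) \<and>
           subgroup Q G \<and> cyclic_group (subgroup_generated G Q) \<and>
           Factorial_Ring.prime q \<and> q \<noteq> p \<and> card Q = q ^ k \<and>
           P \<inter> Q = {\<one>\<^bsub>G\<^esub>} \<and> P <#>\<^bsub>G\<^esub> Q = carrier G \<and>
           card ((\<lambda>x. \<lambda>y\<in>P. x \<otimes>\<^bsub>G\<^esub> y \<otimes>\<^bsub>G\<^esub> inv\<^bsub>G\<^esub> x) ` Q) \<ge> card C"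
proof -
  note A = affine_cyclic_decompD[OF assms(1)]
  obtain q k where q: "Factorial_Ring.prime q" "q \<noteq> p" and card_C: "card C = q ^ k"
    using A(8) by blast
  obtain \<pi> where "frattini_cover G A \<pi>"
    using frattini_cover_if_no_subgroup_quotient[OF assms(2) A(1) assms(4-6)] by blast
  then interpret \<pi>: frattini_cover G A \<pi> .
  obtain P n where P: "P \<lhd> G" "card P = p ^ n" "\<pi> ` P = E"
    using \<pi>.normal_prime_power_lift[OF assms(3) A(3,4)] A(5) by blast
  obtain Q b where Q: "subgroup Q G" "cyclic_group (subgroup_generated G Q)" "card Q = q ^ b" "\<pi> ` Q = C"
    using \<pi>.cyclic_prime_power_subgroup_lift[OF assms(3) A(2) \<pi>.image_carrier q(1) A(6,7) card_C] .
  have QG: "Q \<subseteq> carrier G" and PG: "P \<subseteq> carrier G"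
    using subgroup.subset Q(1) normal_imp_subgroup[OF P(1)] by auto
  have "P \<inter> Q = {\<one>\<^bsub>G\<^esub>}"
    using \<pi>.G.subgroups_Int_eq_one_if_coprime[OF normal_imp_subgroup[OF P(1)] Q(1)] P(2) Q(3) A(3) q
    by (simp add: primes_coprime)
  moreover have "P <#>\<^bsub>G\<^esub> Q = carrier G"
    using \<pi>.set_mult_eq_carrier[OF P(1) Q(1)] P(3) Q(4) A(9) by simp
  moreover have "card C \<le> card ((\<lambda>x. \<lambda>y\<in>P. x \<otimes>\<^bsub>G\<^esub> y \<otimes>\<^bsub>G\<^esub> inv\<^bsub>G\<^esub> x) ` Q)"
    using \<pi>.card_image_le_card_conj_action[OF A(6) QG finite_subset[OF QG assms(3)] _ PG] A(10)
    unfolding P(3) Q(4) by blast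
  ultimately show ?thesis
    using P Q q by blast
qed

end
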